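(* Let $m\in\mathbb{N}$ be odd and divisible by $3$. Then the friendship graph $F_j$ is $\mathbb{Z}_m$-cordial for every integer $j$ with $\frac{2m}{3}\le j\le m$.
   Context: Graphs are finite, simple and undirected. For $n\in\mathbb{N}$, the friendship graph $F_n$ is the union of $n$ copies of the triangle $C_3$ joined at a single common (central) vertex. For an abelian group $A$ and a graph $G=(V,E)$, a vertex labeling $\ell:V\to A$ induces an edge labeling $\ell(\{v_1,v_2\})=\ell(v_1)+\ell(v_2)$. Let $f_V(a)=|\{v\in V:\ell(v)=a\}|$ and $f_E(a)=|\{e\in E:\ell(e)=a\}|$. The labeling is $A$-cordial if $|f_V(a_1)-f_V(a_2)|\le 1$ and $|f_E(a_1)-f_E(a_2)|\le 1$ for all $a_1,a_2\in A$; $G$ is $A$-cordial if it admits an $A$-cordial labeling. *)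

theory Defs
  imports Main
begin

text \<open>A graph is given by a vertex set V and an edge set E of 2-element subsets of V.
  Z_m is represented by the residues {0..<m} with addition mod m.\<close>

definition Zm_cordial :: "nat \<Rightarrow> 'a set \<Rightarrow> 'a set set \<Rightarrow> bool" where
  "Zm_cordial m V E \<longleftrightarrow>
     (\<exists>l :: 'a \<Rightarrow> nat. (\<forall>v\<in>V. l v < m) \<and>
        (\<forall>a1<m. \<forall>a2<m.
           \<bar>int (card {v\<in>V. l v = a1}) - int (card {v\<in>V. l v = a2})\<bar> \<le> 1 \<and>
           \<bar>int (card {e\<in>E. (\<Sum>v\<in>e. l v) mod m = a1})
              - int (card {e\<in>E. (\<Sum>v\<in>e. l v) mod m = a2})\<bar> \<le> 1))"

definition friendship_V :: "nat \<Rightarrow> nat set" where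
  "friendship_V n = {0..2*n}"

definition friendship_E :: "nat \<Rightarrow> nat set set" where
  "friendship_E n = (\<Union>i\<in>{1..n}. {{0, 2*i-1}, {0, 2*i}, {2*i-1, 2*i}})"

end

theory Submission
  imports Defs "HOL-Library.Multiset" "HOL-Number_Theory.Cong"
begin

(* Write m = 3k with k odd, label the centre 0 and the two outer vertices of a triangle by a pair
   (x, y); its spokes then carry x and y and its rim carries x + y.  Along a family of triangles
   (3s + a, 3s + b), s < k, the outer labels run once through the residue classes of a and b
   modulo 3 inside Z_m, and since 2 is invertible modulo k the rim labels 6s + a + b run once
   through the class of a + b.  Hence the families (3s, 3s + 1) and (3s + 2, 3s + 3) together
   put every label on exactly two edges, and adding (3s + 1, 3s + 2) gives a cordial labeling of
   F_3k.  For F_(2k+t) with t < k, the triangles (0, 1) and (3k - 1, 3k) of the first two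
   families are replaced by two copies of (1, 3k - 1): this leaves the edge labels unchanged and
   removes the two surplus vertex labels 0.  The t triangles (3s + 2, 3s + 4) added on top carry
   pairwise distinct labels that avoid the vertex labels already used twice. *)

(* The outer vertices 2i + 1 and 2i + 2 of the triangle i + 1 get the labels of the pair L ! i. *)

definition friendship_labeling :: "nat \<Rightarrow> (nat \<times> nat) list \<Rightarrow> nat \<Rightarrow> nat" where
  "friendship_labeling m L v =
     (if v = 0 then 0 else (if odd v then fst else snd) (L ! ((v - 1) div 2)) mod m)"

definition vertex_labels :: "nat \<Rightarrow> (nat \<times> nat) multiset \<Rightarrow> nat multiset" where
  "vertex_labels m P = image_mset (\<lambda>p. fst p mod m) P + image_mset (\<lambda>p. snd p mod m) P"

(* The centre is labelled 0, so the spokes carry the vertex labels. *)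

definition edge_labels :: "nat \<Rightarrow> (nat \<times> nat) multiset \<Rightarrow> nat multiset" where
  "edge_labels m P = vertex_labels m P + image_mset (\<lambda>p. (fst p + snd p) mod m) P"

lemma friendship_V_Suc: "friendship_V (Suc n) = friendship_V n \<union> {2*n+1, 2*n+2}"
  unfolding friendship_V_def by auto

lemma friendship_E_Suc:
  "friendship_E (Suc n) = friendship_E n \<union> {{0, 2*n+1}, {0, 2*n+2}, {2*n+1, 2*n+2}}"
proof -
  have "{1..Suc n} = insert (Suc n) {1..n}" by auto
  then show ?thesis unfolding friendship_E_def by auto
qed

lemma friendship_E_subset: "e \<in> friendship_E n \<Longrightarrow> e \<subseteq> friendship_V n"
  unfolding friendship_E_def friendship_V_def by auto

lemma finite_friendship_E: "finite (friendship_E n)"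
  unfolding friendship_E_def by auto

lemma friendship_labeling_append:
  "v \<in> friendship_V (length L) \<Longrightarrow> friendship_labeling m (L @ [p]) v = friendship_labeling m L v"
  unfolding friendship_labeling_def friendship_V_def by (auto simp: nth_append)

lemma friendship_labeling_new:
  "friendship_labeling m (L @ [p]) (2 * length L + 1) = fst p mod m"
  "friendship_labeling m (L @ [p]) (2 * length L + 2) = snd p mod m"
  unfolding friendship_labeling_def by (simp_all add: nth_append)

lemma card_filter_eq_sum: "finite A \<Longrightarrow> card {x \<in> A. P x} = (\<Sum>x\<in>A. if P x then 1 else 0)"
  by (simp add: sum.inter_filter[symmetric])

lemma card_friendship_labeling_vertices:
  "card {v \<in> friendship_V (length L). friendship_labeling m L v = a}
     = count (add_mset 0 (vertex_labels m (mset L))) a"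
proof (induction L rule: rev_induct)
  case Nil
  then show ?case by (simp add: friendship_V_def friendship_labeling_def vertex_labels_def)
next
  case (snoc p L)
  let ?l = "friendship_labeling m (L @ [p])"
  let ?new = "{2 * length L + 1, 2 * length L + 2}"
  have split: "{v \<in> friendship_V (length (L @ [p])). ?l v = a}
      = {v \<in> friendship_V (length L). friendship_labeling m L v = a} \<union> {v \<in> ?new. ?l v = a}"
    by (auto simp: friendship_V_Suc friendship_labeling_append)
  have new: "card {v \<in> ?new. ?l v = a}
      = (if fst p mod m = a then 1 else 0) + (if snd p mod m = a then 1 else 0)"
    using friendship_labeling_new[of m L p] by (subst card_filter_eq_sum) simp_all
  have "card {v \<in> friendship_V (length (L @ [p])). ?l v = a}
      = card {v \<in> friendship_V (length L). friendship_labeling m L v = a} + card {v \<in> ?new. ?l v = a}"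
    unfolding split by (rule card_Un_disjoint) (auto simp: friendship_V_def)
  then show ?case
    using snoc new by (simp add: vertex_labels_def)
qed

lemma card_friendship_labeling_edges:
  "card {e \<in> friendship_E (length L). (\<Sum>v\<in>e. friendship_labeling m L v) mod m = a}
     = count (edge_labels m (mset L)) a"
proof (induction L rule: rev_induct)
  case Nil
  then show ?case by (simp add: friendship_E_def edge_labels_def vertex_labels_def)
next
  case (snoc p L)
  let ?l = "friendship_labeling m (L @ [p])"
  let ?x = "2 * length L + 1" and ?y = "2 * length L + 2"
  let ?new = "{{0, ?x}, {0, ?y}, {?x, ?y}}"
  have old: "(\<Sum>v\<in>e. ?l v) = (\<Sum>v\<in>e. friendship_labeling m L v)" if "e \<in> friendship_E (length L)" for e
    using friendship_E_subset[OF that] by (intro sum.cong) (auto simp: friendship_labeling_append)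
  have split: "{e \<in> friendship_E (length (L @ [p])). (\<Sum>v\<in>e. ?l v) mod m = a}
      = {e \<in> friendship_E (length L). (\<Sum>v\<in>e. friendship_labeling m L v) mod m = a}
        \<union> {e \<in> ?new. (\<Sum>v\<in>e. ?l v) mod m = a}"
    using old by (auto simp: friendship_E_Suc)
  have "?l 0 = 0"
    by (simp add: friendship_labeling_def)
  then have new: "card {e \<in> ?new. (\<Sum>v\<in>e. ?l v) mod m = a}
      = (if fst p mod m = a then 1 else 0) + (if snd p mod m = a then 1 else 0)
        + (if (fst p + snd p) mod m = a then 1 else 0)"
    using friendship_labeling_new[of m L p]
    by (subst card_filter_eq_sum) (simp_all add: doubleton_eq_iff mod_add_eq)
  have disjoint: "friendship_E (length L) \<inter> ?new = {}"
    by (auto simp: friendship_V_def dest!: friendship_E_subset)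
  have "card {e \<in> friendship_E (length (L @ [p])). (\<Sum>v\<in>e. ?l v) mod m = a}
      = card {e \<in> friendship_E (length L). (\<Sum>v\<in>e. friendship_labeling m L v) mod m = a}
        + card {e \<in> ?new. (\<Sum>v\<in>e. ?l v) mod m = a}"
    unfolding split using disjoint by (intro card_Un_disjoint) (auto simp: finite_friendship_E)
  then show ?case
    using snoc new by (simp add: edge_labels_def vertex_labels_def)
qed

lemma vertex_labels_plus: "vertex_labels m (P + Q) = vertex_labels m P + vertex_labels m Q"
  by (simp add: vertex_labels_def)

lemma edge_labels_plus: "edge_labels m (P + Q) = edge_labels m P + edge_labels m Q"
  by (simp add: edge_labels_def vertex_labels_def)

lemma vertex_labels_image_mset:
  "vertex_labels m {#(f s, g s). s \<in># M#} = {#f s mod m. s \<in># M#} + {#g s mod m. s \<in># M#}"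
  by (simp add: vertex_labels_def multiset.map_comp comp_def)

lemma edge_labels_image_mset:
  "edge_labels m {#(f s, g s). s \<in># M#}
     = vertex_labels m {#(f s, g s). s \<in># M#} + {#(f s + g s) mod m. s \<in># M#}"
  by (simp add: edge_labels_def multiset.map_comp comp_def)

lemma repeat_mset_2: "repeat_mset 2 M = M + M"
  by (simp add: numeral_2_eq_2)

lemma repeat_mset_3: "repeat_mset 3 M = M + M + M"
  by (simp add: numeral_3_eq_3)

definition balanced :: "nat \<Rightarrow> nat multiset \<Rightarrow> bool" where
  "balanced n M \<longleftrightarrow> (\<forall>a<n. \<forall>b<n. count M a \<le> count M b + 1)"

lemma balanced_repeat_mset_plus_mset_set:
  "balanced n (repeat_mset q (mset_set {..<n}) + mset_set X)"
  unfolding balanced_def by (auto simp: count_mset_set')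

lemma balanced_if_add_mset_eq:
  assumes "add_mset x M = repeat_mset q (mset_set {..<n}) + mset_set X" and "x \<in> X" and "finite X"
  shows "balanced n M"
proof -
  have "mset_set X = add_mset x (mset_set (X - {x}))"
    using assms(2,3) by (simp add: mset_set.remove)
  then have "M = repeat_mset q (mset_set {..<n}) + mset_set (X - {x})"
    using assms(1) by simp
  then show ?thesis
    by (simp add: balanced_repeat_mset_plus_mset_set)
qed

lemma Zm_cordial_friendship_if_balanced:
  assumes "0 < m"
    and "balanced m (add_mset 0 (vertex_labels m P))" and "balanced m (edge_labels m P)"
  shows "Zm_cordial m (friendship_V (size P)) (friendship_E (size P))"
proof -
  obtain L where P: "P = mset L"
    using ex_mset by metis
  show ?thesis
    unfolding Zm_cordial_def P size_mset
  proof (intro exI[of _ "friendship_labeling m L"] conjI ballI allI impI)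
    show "friendship_labeling m L v < m" for v
      using assms(1) by (simp add: friendship_labeling_def)
    fix a1 a2 assume "a1 < m" "a2 < m"
    then have bal: "count M a1 \<le> count M a2 + 1" "count M a2 \<le> count M a1 + 1"
      if "balanced m M" for M
      using that unfolding balanced_def by blast+
    show "\<bar>int (card {v \<in> friendship_V (length L). friendship_labeling m L v = a1})
        - int (card {v \<in> friendship_V (length L). friendship_labeling m L v = a2})\<bar> \<le> 1"
      using bal[OF assms(2)] unfolding card_friendship_labeling_vertices P by linarith
    show "\<bar>int (card {e \<in> friendship_E (length L). (\<Sum>v\<in>e. friendship_labeling m L v) mod m = a1})
        - int (card {e \<in> friendship_E (length L). (\<Sum>v\<in>e. friendship_labeling m L v) mod m = a2})\<bar> \<le> 1"
      using bal[OF assms(3)] unfolding card_friendship_labeling_edges P by linarith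
  qed
qed

lemma mod_mult_affine:
  fixes d e c s k :: nat
  assumes "0 < d"
  shows "(d * e * s + c) mod (d * k) = d * ((e * s + c div d) mod k) + c mod d"
proof -
  have "(d * e * s + c) div d = e * s + c div d"
    using assms by (simp add: mult.assoc)
  moreover have "(d * e * s + c) mod d = c mod d"
    by (simp add: mult.assoc)
  ultimately show ?thesis
    by (simp add: mod_mult2_eq)
qed

lemma inj_on_mod_mult_affine:
  fixes d e c k :: nat
  assumes "coprime e k" and "0 < d"
  shows "inj_on (\<lambda>s. (d * e * s + c) mod (d * k)) {..<k}"
proof
  fix s s' assume s: "s \<in> {..<k}" and s': "s' \<in> {..<k}"
    and eq: "(d * e * s + c) mod (d * k) = (d * e * s' + c) mod (d * k)"
  from eq have "[e * s + c div d = e * s' + c div d] (mod k)"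
    using assms(2) by (simp add: mod_mult_affine cong_def)
  then have "[s = s'] (mod k)"
    using assms(1) by (simp add: cong_add_rcancel_nat cong_mult_lcancel_nat)
  then show "s = s'"
    using s s' by (simp add: cong_less_modulus_unique_nat)
qed

definition residue_class :: "nat \<Rightarrow> nat \<Rightarrow> nat \<Rightarrow> nat set" where
  "residue_class d n c = {a. a < n \<and> a mod d = c mod d}"

lemma finite_residue_class [simp]: "finite (residue_class d n c)"
  by (simp add: residue_class_def)

lemma mem_residue_class [simp]: "a \<in> residue_class d n c \<longleftrightarrow> a < n \<and> a mod d = c mod d"
  by (simp add: residue_class_def)

lemma residue_class_eq_image:
  fixes d k r :: nat
  assumes "r < d"
  shows "residue_class d (d * k) r = (\<lambda>u. d * u + r) ` {..<k}"
proof (intro set_eqI iffI)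
  fix a assume "a \<in> residue_class d (d * k) r"
  then have "a = d * (a div d) + r" and "a div d < k"
    using assms by (auto simp: less_mult_imp_div_less mult.commute)
  then show "a \<in> (\<lambda>u. d * u + r) ` {..<k}"
    by blast
next
  fix a assume "a \<in> (\<lambda>u. d * u + r) ` {..<k}"
  then obtain u where "u < k" and a: "a = d * u + r" by blast
  have "d * u + r < d * Suc u"
    using assms by simp
  also have "\<dots> \<le> d * k"
    using \<open>u < k\<close> by (intro mult_le_mono2) simp
  finally show "a \<in> residue_class d (d * k) r"
    using a assms by simp
qed

lemma mod_mult_affine_image:
  fixes d e c k :: nat
  assumes "coprime e k" and "0 < d"
  shows "(\<lambda>s. (d * e * s + c) mod (d * k)) ` {..<k} = residue_class d (d * k) c"
    (is "?f ` _ = ?R")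
proof (rule card_subset_eq)
  have "?R = residue_class d (d * k) (c mod d)"
    by (simp add: residue_class_def)
  also have "\<dots> = (\<lambda>u. d * u + c mod d) ` {..<k}"
    using assms(2) by (simp add: residue_class_eq_image)
  finally have R: "?R = (\<lambda>u. d * u + c mod d) ` {..<k}" .
  show "finite ?R"
    by simp
  show "?f ` {..<k} \<subseteq> ?R"
    unfolding R using assms(2) by (auto simp: mod_mult_affine)
  have "inj_on (\<lambda>u. d * u + c mod d) {..<k}"
    using assms(2) by (auto intro: inj_onI)
  then show "card (?f ` {..<k}) = card ?R"
    unfolding R using inj_on_mod_mult_affine[OF assms] by (simp add: card_image)
qed

lemma mset_set_Un_residue_classes:
  assumes "A \<subseteq> residue_class 3 n 0" and "B \<subseteq> residue_class 3 n 1" and "C \<subseteq> residue_class 3 n 2"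
  shows "mset_set (A \<union> B \<union> C) = mset_set A + mset_set B + mset_set C"
proof -
  have "finite A" "finite B" "finite C"
    using assms by (auto intro: finite_subset)
  moreover have "A \<inter> B = {}" and "(A \<union> B) \<inter> C = {}"
    using assms by fastforce+
  ultimately show ?thesis
    by (simp add: mset_set_Union)
qed

lemma mset_set_lessThan_residue_classes:
  "mset_set {..<3 * k} = mset_set (residue_class 3 (3 * k) 0) + mset_set (residue_class 3 (3 * k) 1)
     + mset_set (residue_class 3 (3 * k) 2)"
proof -
  have classes: "{..<3 * k}
      = residue_class 3 (3 * k) 0 \<union> residue_class 3 (3 * k) 1 \<union> residue_class 3 (3 * k) 2"
    by auto
  show ?thesis
    unfolding classes by (rule mset_set_Un_residue_classes; rule order_refl)
qed

definition arith_triangles :: "nat \<Rightarrow> nat \<Rightarrow> nat set \<Rightarrow> (nat \<times> nat) multiset" where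
  "arith_triangles a b I = {#(3 * s + a, 3 * s + b). s \<in># mset_set I#}"

lemma labels_arith_triangles_prefix:
  assumes "odd k" and "t \<le> k"
  shows "vertex_labels (3 * k) (arith_triangles a b {..<t})
           = mset_set ((\<lambda>s. (3 * s + a) mod (3 * k)) ` {..<t})
             + mset_set ((\<lambda>s. (3 * s + b) mod (3 * k)) ` {..<t})"
    and "edge_labels (3 * k) (arith_triangles a b {..<t})
           = vertex_labels (3 * k) (arith_triangles a b {..<t})
             + mset_set ((\<lambda>s. (3 * s + a + (3 * s + b)) mod (3 * k)) ` {..<t})"
proof -
  have inj: "inj_on (\<lambda>s. (3 * e * s + c) mod (3 * k)) {..<t}" if "coprime e k" for e c
    using inj_on_mod_mult_affine[OF that, of 3 c] assms(2) by (auto elim: inj_on_subset)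
  have "inj_on (\<lambda>s. (3 * s + c) mod (3 * k)) {..<t}" for c
    using inj[of 1 c] by simp
  then show "vertex_labels (3 * k) (arith_triangles a b {..<t})
           = mset_set ((\<lambda>s. (3 * s + a) mod (3 * k)) ` {..<t})
             + mset_set ((\<lambda>s. (3 * s + b) mod (3 * k)) ` {..<t})"
    by (simp add: arith_triangles_def vertex_labels_image_mset image_mset_mset_set)
  have "inj_on (\<lambda>s. (3 * s + a + (3 * s + b)) mod (3 * k)) {..<t}"
    using inj[of 2 "a + b"] assms(1) by (simp add: algebra_simps)
  then show "edge_labels (3 * k) (arith_triangles a b {..<t})
           = vertex_labels (3 * k) (arith_triangles a b {..<t})
             + mset_set ((\<lambda>s. (3 * s + a + (3 * s + b)) mod (3 * k)) ` {..<t})"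
    by (simp add: arith_triangles_def edge_labels_image_mset image_mset_mset_set)
qed

lemma labels_arith_triangles:
  assumes "odd k"
  shows "vertex_labels (3 * k) (arith_triangles a b {..<k})
           = mset_set (residue_class 3 (3 * k) a) + mset_set (residue_class 3 (3 * k) b)"
    and "edge_labels (3 * k) (arith_triangles a b {..<k})
           = vertex_labels (3 * k) (arith_triangles a b {..<k}) + mset_set (residue_class 3 (3 * k) (a + b))"
proof -
  have "(\<lambda>s. (3 * s + c) mod (3 * k)) ` {..<k} = residue_class 3 (3 * k) c" for c
    using mod_mult_affine_image[of 1 k 3 c] by simp
  moreover have "(\<lambda>s. (3 * s + a + (3 * s + b)) mod (3 * k)) ` {..<k} = residue_class 3 (3 * k) (a + b)"
    using mod_mult_affine_image[of 2 k 3 "a + b"] assms by (simp add: algebra_simps)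
  ultimately show "vertex_labels (3 * k) (arith_triangles a b {..<k})
           = mset_set (residue_class 3 (3 * k) a) + mset_set (residue_class 3 (3 * k) b)"
    and "edge_labels (3 * k) (arith_triangles a b {..<k})
           = vertex_labels (3 * k) (arith_triangles a b {..<k}) + mset_set (residue_class 3 (3 * k) (a + b))"
    using labels_arith_triangles_prefix[OF assms order_refl] by simp_all
qed

definition base_triangles :: "nat \<Rightarrow> (nat \<times> nat) multiset" where
  "base_triangles k = arith_triangles 0 1 {..<k} + arith_triangles 2 3 {..<k}"

lemma labels_base_triangles:
  assumes "odd k"
  shows "vertex_labels (3 * k) (base_triangles k)
           = mset_set {..<3 * k} + mset_set (residue_class 3 (3 * k) 0)"
    and "edge_labels (3 * k) (base_triangles k) = repeat_mset 2 (mset_set {..<3 * k})"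
proof -
  have R: "residue_class 3 n 3 = residue_class 3 n 0" "residue_class 3 n (0 + 1) = residue_class 3 n 1"
    "residue_class 3 n (2 + 3) = residue_class 3 n 2" for n
    by (simp_all add: residue_class_def)
  show "vertex_labels (3 * k) (base_triangles k)
      = mset_set {..<3 * k} + mset_set (residue_class 3 (3 * k) 0)"
    unfolding base_triangles_def vertex_labels_plus labels_arith_triangles[OF assms] R
      mset_set_lessThan_residue_classes
    by (simp only: ac_simps)
  show "edge_labels (3 * k) (base_triangles k) = repeat_mset 2 (mset_set {..<3 * k})"
    unfolding base_triangles_def edge_labels_plus labels_arith_triangles[OF assms] R
      mset_set_lessThan_residue_classes repeat_mset_2
    by (simp only: ac_simps)
qed

definition full_triangles :: "nat \<Rightarrow> (nat \<times> nat) multiset" where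
  "full_triangles k = base_triangles k + arith_triangles 1 2 {..<k}"

lemma size_full_triangles: "size (full_triangles k) = 3 * k"
  by (simp add: full_triangles_def base_triangles_def arith_triangles_def)

lemma labels_full_triangles:
  assumes "odd k"
  shows "vertex_labels (3 * k) (full_triangles k) = repeat_mset 2 (mset_set {..<3 * k})"
    and "edge_labels (3 * k) (full_triangles k) = repeat_mset 3 (mset_set {..<3 * k})"
proof -
  have R: "residue_class 3 n (1 + 2) = residue_class 3 n 0" for n
    by (simp add: residue_class_def)
  show "vertex_labels (3 * k) (full_triangles k) = repeat_mset 2 (mset_set {..<3 * k})"
    unfolding full_triangles_def vertex_labels_plus labels_base_triangles[OF assms]
      labels_arith_triangles[OF assms] repeat_mset_2 mset_set_lessThan_residue_classes
    by (simp only: ac_simps)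
  show "edge_labels (3 * k) (full_triangles k) = repeat_mset 3 (mset_set {..<3 * k})"
    unfolding full_triangles_def edge_labels_plus labels_base_triangles[OF assms]
      labels_arith_triangles[OF assms] R repeat_mset_2 repeat_mset_3 mset_set_lessThan_residue_classes
    by (simp only: ac_simps)
qed

definition partial_triangles :: "nat \<Rightarrow> nat \<Rightarrow> (nat \<times> nat) multiset" where
  "partial_triangles k t = {#(1, 3 * k - 1), (1, 3 * k - 1)#}
     + arith_triangles 0 1 {1..<k} + arith_triangles 2 3 {..<k - 1} + arith_triangles 2 4 {..<t}"

lemma size_partial_triangles: "0 < k \<Longrightarrow> size (partial_triangles k t) = 2 * k + t"
  by (simp add: partial_triangles_def arith_triangles_def)

lemma partial_triangles_exchange:
  assumes "0 < k"
  shows "partial_triangles k t + {#(0, 1), (3 * k - 1, 3 * k)#}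
    = {#(1, 3 * k - 1), (1, 3 * k - 1)#} + base_triangles k + arith_triangles 2 4 {..<t}"
proof -
  have "{..<k} = insert 0 {1..<k}"
    using assms by auto
  then have A: "arith_triangles 0 1 {..<k} = add_mset (0, 1) (arith_triangles 0 1 {1..<k})"
    by (simp add: arith_triangles_def)
  have "{..<k} = insert (k - 1) {..<k - 1}"
    using assms by auto
  moreover have "3 * (k - 1) + 2 = 3 * k - 1" and "3 * (k - 1) + 3 = 3 * k"
    using assms by simp_all
  ultimately have B: "arith_triangles 2 3 {..<k} = add_mset (3 * k - 1, 3 * k) (arith_triangles 2 3 {..<k - 1})"
    by (simp add: arith_triangles_def)
  show ?thesis
    unfolding base_triangles_def A B partial_triangles_def by (simp add: ac_simps)
qed

lemma labels_exchanged_pairs: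
  assumes "1 < m"
  shows "vertex_labels m {#(0, 1), (m - 1, m)#} = {#0, 0, 1, m - 1#}"
    and "vertex_labels m {#(1, m - 1), (1, m - 1)#} = {#1, 1, m - 1, m - 1#}"
    and "edge_labels m {#(0, 1), (m - 1, m)#} = edge_labels m {#(1, m - 1), (1, m - 1)#}"
proof -
  have "m = Suc (Suc (m - 2))"
    using assms by simp
  then show "vertex_labels m {#(0, 1), (m - 1, m)#} = {#0, 0, 1, m - 1#}"
    and "vertex_labels m {#(1, m - 1), (1, m - 1)#} = {#1, 1, m - 1, m - 1#}"
    and "edge_labels m {#(0, 1), (m - 1, m)#} = edge_labels m {#(1, m - 1), (1, m - 1)#}"
    by (simp_all add: vertex_labels_def edge_labels_def mod_if)
qed

lemma labels_arith_triangles_2_4: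
  assumes "odd k" and "t < k"
  shows "vertex_labels (3 * k) (arith_triangles 2 4 {..<t})
           = mset_set ((\<lambda>s. 3 * s + 2) ` {..<t}) + mset_set ((\<lambda>s. 3 * s + 4) ` {..<t})"
    and "edge_labels (3 * k) (arith_triangles 2 4 {..<t})
           = vertex_labels (3 * k) (arith_triangles 2 4 {..<t})
             + mset_set ((\<lambda>s. (6 * s + 6) mod (3 * k)) ` {..<t})"
proof -
  have "(\<lambda>s. (3 * s + c) mod (3 * k)) ` {..<t} = (\<lambda>s. 3 * s + c) ` {..<t}" if "c \<le> 4" for c
    using assms(2) that by (intro image_cong) auto
  then show "vertex_labels (3 * k) (arith_triangles 2 4 {..<t})
           = mset_set ((\<lambda>s. 3 * s + 2) ` {..<t}) + mset_set ((\<lambda>s. 3 * s + 4) ` {..<t})"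
    and "edge_labels (3 * k) (arith_triangles 2 4 {..<t})
           = vertex_labels (3 * k) (arith_triangles 2 4 {..<t})
             + mset_set ((\<lambda>s. (6 * s + 6) mod (3 * k)) ` {..<t})"
    using labels_arith_triangles_prefix[OF assms(1), of t 2 4] assms(2) by (simp_all add: algebra_simps)
qed

lemma edge_labels_partial_triangles:
  assumes "odd k" and "t < k"
  shows "edge_labels (3 * k) (partial_triangles k t) = repeat_mset 2 (mset_set {..<3 * k})
    + mset_set ((\<lambda>s. (6 * s + 6) mod (3 * k)) ` {..<t} \<union> (\<lambda>s. 3 * s + 4) ` {..<t}
                \<union> (\<lambda>s. 3 * s + 2) ` {..<t})"
proof -
  have "0 < k"
    using assms(1) by (simp add: odd_pos)
  have "(\<lambda>s. (6 * s + 6) mod (3 * k)) ` {..<t} \<subseteq> residue_class 3 (3 * k) 0"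
    using \<open>0 < k\<close> by (auto simp: mod_mod_cancel)
  moreover have "(\<lambda>s. 3 * s + 4) ` {..<t} \<subseteq> residue_class 3 (3 * k) 1"
    using assms(2) by auto
  moreover have "(\<lambda>s. 3 * s + 2) ` {..<t} \<subseteq> residue_class 3 (3 * k) 2"
    using assms(2) by (auto simp: mod_Suc)
  ultimately have "mset_set ((\<lambda>s. (6 * s + 6) mod (3 * k)) ` {..<t} \<union> (\<lambda>s. 3 * s + 4) ` {..<t}
                  \<union> (\<lambda>s. 3 * s + 2) ` {..<t})
      = mset_set ((\<lambda>s. (6 * s + 6) mod (3 * k)) ` {..<t}) + mset_set ((\<lambda>s. 3 * s + 4) ` {..<t})
        + mset_set ((\<lambda>s. 3 * s + 2) ` {..<t})"
    by (rule mset_set_Un_residue_classes)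
  then have extra: "edge_labels (3 * k) (arith_triangles 2 4 {..<t})
      = mset_set ((\<lambda>s. (6 * s + 6) mod (3 * k)) ` {..<t} \<union> (\<lambda>s. 3 * s + 4) ` {..<t}
                  \<union> (\<lambda>s. 3 * s + 2) ` {..<t})"
    unfolding labels_arith_triangles_2_4[OF assms] by (simp only: ac_simps)
  have "edge_labels (3 * k) (partial_triangles k t) + edge_labels (3 * k) {#(0, 1), (3 * k - 1, 3 * k)#}
    = edge_labels (3 * k) {#(1, 3 * k - 1), (1, 3 * k - 1)#}
      + edge_labels (3 * k) (base_triangles k) + edge_labels (3 * k) (arith_triangles 2 4 {..<t})"
    by (simp only: edge_labels_plus[symmetric] partial_triangles_exchange[OF \<open>0 < k\<close>])
  also have "\<dots> = edge_labels (3 * k) {#(0, 1), (3 * k - 1, 3 * k)#} + (repeat_mset 2 (mset_set {..<3 * k})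
    + mset_set ((\<lambda>s. (6 * s + 6) mod (3 * k)) ` {..<t} \<union> (\<lambda>s. 3 * s + 4) ` {..<t}
                \<union> (\<lambda>s. 3 * s + 2) ` {..<t}))"
    using labels_exchanged_pairs(3)[of "3 * k"] \<open>0 < k\<close>
    unfolding labels_base_triangles(2)[OF assms(1)] extra by (simp add: add.assoc)
  finally show ?thesis
    by (simp add: add.commute)
qed

(* One label 0 belongs to the centre; the second one makes the right-hand side a copy of Z_m
   plus a set. *)

lemma vertex_labels_partial_triangles:
  assumes "odd k" and "t < k"
  shows "add_mset 0 (add_mset 0 (vertex_labels (3 * k) (partial_triangles k t)))
    = mset_set {..<3 * k} + mset_set (residue_class 3 (3 * k) 0 \<union> insert 1 ((\<lambda>s. 3 * s + 4) ` {..<t})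
        \<union> insert (3 * k - 1) ((\<lambda>s. 3 * s + 2) ` {..<t}))"
proof -
  have "0 < k"
    using assms(1) by (simp add: odd_pos)
  have S4: "insert 1 ((\<lambda>s. 3 * s + 4) ` {..<t}) \<subseteq> residue_class 3 (3 * k) 1"
    using assms(2) \<open>0 < k\<close> by auto
  have "3 * k - 1 = 3 * (k - 1) + 2"
    using \<open>0 < k\<close> by simp
  then have "3 * k - 1 \<in> residue_class 3 (3 * k) 2"
    using \<open>0 < k\<close> by (simp add: mod_Suc)
  moreover have "(\<lambda>s. 3 * s + 2) ` {..<t} \<subseteq> residue_class 3 (3 * k) 2"
    using assms(2) by (auto simp: mod_Suc)
  ultimately have S2: "insert (3 * k - 1) ((\<lambda>s. 3 * s + 2) ` {..<t}) \<subseteq> residue_class 3 (3 * k) 2"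
    by simp
  have "mset_set (residue_class 3 (3 * k) 0 \<union> insert 1 ((\<lambda>s. 3 * s + 4) ` {..<t})
        \<union> insert (3 * k - 1) ((\<lambda>s. 3 * s + 2) ` {..<t}))
      = mset_set (residue_class 3 (3 * k) 0) + mset_set (insert 1 ((\<lambda>s. 3 * s + 4) ` {..<t}))
        + mset_set (insert (3 * k - 1) ((\<lambda>s. 3 * s + 2) ` {..<t}))"
    by (rule mset_set_Un_residue_classes[OF order_refl S4 S2])
  also have "\<dots> = mset_set (residue_class 3 (3 * k) 0) + add_mset 1 (mset_set ((\<lambda>s. 3 * s + 4) ` {..<t}))
        + add_mset (3 * k - 1) (mset_set ((\<lambda>s. 3 * s + 2) ` {..<t}))"
    using assms(2) by (subst mset_set.insert; auto)+
  finally have extra: "mset_set (residue_class 3 (3 * k) 0 \<union> insert 1 ((\<lambda>s. 3 * s + 4) ` {..<t})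
        \<union> insert (3 * k - 1) ((\<lambda>s. 3 * s + 2) ` {..<t}))
      = mset_set (residue_class 3 (3 * k) 0) + add_mset 1 (mset_set ((\<lambda>s. 3 * s + 4) ` {..<t}))
        + add_mset (3 * k - 1) (mset_set ((\<lambda>s. 3 * s + 2) ` {..<t}))" .
  have "vertex_labels (3 * k) (partial_triangles k t) + vertex_labels (3 * k) {#(0, 1), (3 * k - 1, 3 * k)#}
    = vertex_labels (3 * k) {#(1, 3 * k - 1), (1, 3 * k - 1)#}
      + vertex_labels (3 * k) (base_triangles k) + vertex_labels (3 * k) (arith_triangles 2 4 {..<t})"
    by (simp only: vertex_labels_plus[symmetric] partial_triangles_exchange[OF \<open>0 < k\<close>])
  then have "vertex_labels (3 * k) (partial_triangles k t) + {#0, 0, 1, 3 * k - 1#}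
    = {#1, 1, 3 * k - 1, 3 * k - 1#} + (mset_set {..<3 * k} + mset_set (residue_class 3 (3 * k) 0))
      + (mset_set ((\<lambda>s. 3 * s + 2) ` {..<t}) + mset_set ((\<lambda>s. 3 * s + 4) ` {..<t}))"
    using labels_exchanged_pairs(1,2)[of "3 * k"] \<open>0 < k\<close>
    unfolding labels_base_triangles(1)[OF assms(1)] labels_arith_triangles_2_4(1)[OF assms] by simp
  then show ?thesis
    unfolding extra by (simp add: ac_simps)
qed

lemma Zm_cordial_friendship_full:
  assumes "odd k"
  shows "Zm_cordial (3 * k) (friendship_V (3 * k)) (friendship_E (3 * k))"
proof -
  have "0 < 3 * k"
    using assms by (simp add: odd_pos)
  moreover have "balanced (3 * k) (add_mset 0 (vertex_labels (3 * k) (full_triangles k)))"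
    using balanced_repeat_mset_plus_mset_set[of "3 * k" 2 "{0}"]
    by (simp add: labels_full_triangles[OF assms])
  moreover have "balanced (3 * k) (edge_labels (3 * k) (full_triangles k))"
    using balanced_repeat_mset_plus_mset_set[of "3 * k" 3 "{}"]
    by (simp add: labels_full_triangles[OF assms])
  ultimately have "Zm_cordial (3 * k) (friendship_V (size (full_triangles k)))
      (friendship_E (size (full_triangles k)))"
    by (rule Zm_cordial_friendship_if_balanced)
  then show ?thesis
    by (simp only: size_full_triangles)
qed

lemma Zm_cordial_friendship_partial:
  assumes "odd k" and "t < k"
  shows "Zm_cordial (3 * k) (friendship_V (2 * k + t)) (friendship_E (2 * k + t))"
proof -
  have "0 < k"
    using assms(1) by (simp add: odd_pos)
  then have "0 < 3 * k"
    by simp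
  moreover have "balanced (3 * k) (add_mset 0 (vertex_labels (3 * k) (partial_triangles k t)))"
    using vertex_labels_partial_triangles[OF assms] \<open>0 < k\<close>
    by (intro balanced_if_add_mset_eq[where q=1 and x=0]) auto
  moreover have "balanced (3 * k) (edge_labels (3 * k) (partial_triangles k t))"
    unfolding edge_labels_partial_triangles[OF assms] by (rule balanced_repeat_mset_plus_mset_set)
  ultimately have "Zm_cordial (3 * k) (friendship_V (size (partial_triangles k t)))
      (friendship_E (size (partial_triangles k t)))"
    by (rule Zm_cordial_friendship_if_balanced)
  then show ?thesis
    by (simp only: size_partial_triangles[OF \<open>0 < k\<close>])
qed

theorem theorem12p2:
  fixes m j :: nat
  assumes "odd m" and "3 dvd m" and "2 * m \<le> 3 * j" and "j \<le> m"
  shows "Zm_cordial m (friendship_V j) (friendship_E j)"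
proof -
  obtain k where m: "m = 3 * k"
    using assms(2) by (elim dvdE)
  with assms have "odd k" and "2 * k \<le> j" and "j \<le> 3 * k"
    by simp_all
  then consider "j = 3 * k" | "j = 2 * k + (j - 2 * k)" and "j - 2 * k < k"
    by linarith
  then show ?thesis
  proof cases
    case 1
    then show ?thesis
      unfolding m using Zm_cordial_friendship_full[OF \<open>odd k\<close>] by simp
  next
    case 2
    then show ?thesis
      unfolding m using Zm_cordial_friendship_partial[OF \<open>odd k\<close>] by metis
  qed
qed

end
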